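(* Let $k\ge1$ be odd, $\omega=i\sqrt2$, and with $S=\begin{psmallmatrix}0&-1\\1&0\end{psmallmatrix}$, $T=\begin{psmallmatrix}1&1\\0&1\end{psmallmatrix}$, $T_\omega=\begin{psmallmatrix}1&\omega\\0&1\end{psmallmatrix}$, $U=TS$, let $W_{k,k}=\ker(\mathbf{1}+S)\cap\ker(\mathbf{1}+U+U^2)\cap\ker(\mathbf{1}+ST_\omega+T_\omega S+T_\omega^{-1}ST_\omega S)$. Let $\varepsilon=\begin{psmallmatrix}-1&0\\0&1\end{psmallmatrix}$, so $P|\varepsilon=P(-z,-\bar z)$. Then $W_{k,k}|\varepsilon=W_{k,k}$, and hence $W_{k,k}=W_{k,k}^1\oplus W_{k,k}^{-1}$, where $W_{k,k}^{\pm1}=W_{k,k}\cap\{P\in V_{k,k}:P(-z,-\bar z)=\pm P(z,\bar z)\}$.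
   Context: $V_{k,k}$: polynomials $\sum_{0\le i,j\le k}c_{ij}z^i\bar z^j$ over $\mathbb{C}$ with right action $(P|\gamma)(z,\bar z)=(cz+e)^k\overline{(cz+e)}^kP\!\left(\frac{az+b}{cz+e},\frac{\bar a\bar z+\bar b}{\bar c\bar z+\bar e}\right)$ for $\gamma=\begin{psmallmatrix}a&b\\c&e\end{psmallmatrix}$, extended linearly; $\ker(X)=\{P:P|X=0\}$; $W|\varepsilon=\{P|\varepsilon:P\in W\}$. *)

theory Defs
  imports Complex_Main
begin

text \<open>2x2 complex matrices (a,b,c,e) standing for [[a,b],[c,e]].\<close>
type_synonym mat2 = "complex \<times> complex \<times> complex \<times> complex"

fun mmul :: "mat2 \<Rightarrow> mat2 \<Rightarrow> mat2" where
  "mmul (a,b,c,d) (a',b',c',d') = (a*a'+b*c', a*b'+b*d', c*a'+d*c', c*b'+d*d')"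

fun minv :: "mat2 \<Rightarrow> mat2" where
  "minv (a,b,c,d) = (let D = a*d - b*c in (d/D, -b/D, -c/D, a/D))"

definition mId :: mat2 where "mId = (1,0,0,1)"
definition mS :: mat2 where "mS = (0,-1,1,0)"
definition mT :: mat2 where "mT = (1,1,0,1)"
definition omega :: complex where "omega = \<i> * complex_of_real (sqrt 2)"
definition mTw :: mat2 where "mTw = (1,omega,0,1)"
definition mU :: mat2 where "mU = mmul mT mS"
definition meps :: mat2 where "meps = (-1,0,0,1)"

text \<open>Polynomials in z and conj z of bidegree at most (k,k), viewed as functions on the
  complex plane (this identification is injective).\<close>
definition pev :: "nat \<Rightarrow> (nat \<Rightarrow> nat \<Rightarrow> complex) \<Rightarrow> complex \<Rightarrow> complex" where
  "pev k c = (\<lambda>z. \<Sum>i\<le>k. \<Sum>j\<le>k. c i j * z ^ i * cnj z ^ j)"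

definition Vkk :: "nat \<Rightarrow> (complex \<Rightarrow> complex) set" where
  "Vkk k = {P. \<exists>c. P = pev k c}"

definition coeffs_of :: "nat \<Rightarrow> (complex \<Rightarrow> complex) \<Rightarrow> nat \<Rightarrow> nat \<Rightarrow> complex" where
  "coeffs_of k P = (SOME c. P = pev k c)"

text \<open>(P|gamma)(z,zbar) = (cz+e)^k conj(cz+e)^k P((az+b)/(cz+e), conj of that),
  written out as the polynomial obtained by clearing denominators.\<close>
fun slash :: "nat \<Rightarrow> mat2 \<Rightarrow> (complex \<Rightarrow> complex) \<Rightarrow> complex \<Rightarrow> complex" where
  "slash k (a,b,c,e) P = (\<lambda>z. \<Sum>i\<le>k. \<Sum>j\<le>k. coeffs_of k P i j *
      ((a*z+b) ^ i * (c*z+e) ^ (k-i)) * cnj ((a*z+b) ^ j * (c*z+e) ^ (k-j)))"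

text \<open>Elements of the group ring: finite lists of (coefficient, matrix); the action is extended linearly.\<close>
definition slashX :: "nat \<Rightarrow> (complex \<times> mat2) list \<Rightarrow> (complex \<Rightarrow> complex) \<Rightarrow> complex \<Rightarrow> complex" where
  "slashX k X P = (\<lambda>z. \<Sum>(n,g)\<leftarrow>X. n * slash k g P z)"

definition kerX :: "nat \<Rightarrow> (complex \<times> mat2) list \<Rightarrow> (complex \<Rightarrow> complex) set" where
  "kerX k X = {P \<in> Vkk k. slashX k X P = (\<lambda>_. 0)}"

definition Wkk :: "nat \<Rightarrow> (complex \<Rightarrow> complex) set" where
  "Wkk k = kerX k [(1, mId), (1, mS)]
         \<inter> kerX k [(1, mId), (1, mU), (1, mmul mU mU)]
         \<inter> kerX k [(1, mId), (1, mmul mS mTw), (1, mmul mTw mS),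
                   (1, mmul (mmul (mmul (minv mTw) mS) mTw) mS)]"

definition Wkk_sign :: "nat \<Rightarrow> complex \<Rightarrow> (complex \<Rightarrow> complex) set" where
  "Wkk_sign k s = Wkk k \<inter> {P \<in> Vkk k. \<forall>z. P (-z) = s * P z}"

end

(* Conjugation by eps = [[-1,0],[0,1]] maps each defining element X of W to S X B for a suitable
   matrix B: as multisets of matrices

     eps (1 + S) = S (1 + S) B_0,   eps (1 + U + U^2) = S (1 + U + U^2) B_(-1),   eps X_T = S X_T B_omega,

   where B_t = [[1,t],[0,-1]] and X_T is the third defining element.  On ker(1 + S) the matrix S acts
   by -1, so for P in W we get P|eps|X = (P|S)|X|B = -(P|X)|B = 0.  Thus W|eps is contained in W, and
   as eps is an involution, W|eps = W; the eigenspace splitting is the decomposition into even and odd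
   parts.  Identities between slash operators are proved away from the finitely many poles, where
   (P|g)(z) = |cz+e|^(2k) P(gz), and extended by continuity. *)

theory Submission
  imports Defs "HOL-Computational_Algebra.Polynomial" "HOL-Library.Multiset"
begin

declare slash.simps [simp del]

lemma continuous_eq_off_finite:
  fixes f g :: "'a::{t2_space,perfect_space} \<Rightarrow> 'b::t2_space"
  assumes "continuous_on UNIV f" "continuous_on UNIV g" "finite F"
    and "\<And>z. z \<notin> F \<Longrightarrow> f z = g z"
  shows "f = g"
proof
  fix z
  have "\<forall>\<^sub>F w in at z. \<forall>x\<in>F. w \<noteq> x"
    using assms(3) by (intro eventually_ball_finite) (auto intro: eventually_neq_at_within)
  then have "\<forall>\<^sub>F w in at z. f w = g w"
    by eventually_elim (use assms(4) in blast)
  then have "\<forall>\<^sub>F w in nhds z. f w = g w"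
    using assms(1,2) by (intro at_within_isCont_imp_nhds) (auto simp: continuous_on_eq_continuous_at)
  then show "f z = g z"
    by (rule eventually_nhds_x_imp_x)
qed

lemma even_odd_decomposition:
  fixes W :: "('a::group_add \<Rightarrow> 'b::field_char_0) set"
  assumes "\<And>P Q r s. P \<in> W \<Longrightarrow> Q \<in> W \<Longrightarrow> (\<lambda>z. r * P z + s * Q z) \<in> W"
    and "\<And>P. P \<in> W \<Longrightarrow> (\<lambda>z. P (- z)) \<in> W"
    and "P \<in> W"
  shows "\<exists>!gh. fst gh \<in> W \<inter> {g. \<forall>z. g (- z) = g z} \<and> snd gh \<in> W \<inter> {h. \<forall>z. h (- z) = - h z}
           \<and> P = (\<lambda>z. fst gh z + snd gh z)"
proof (rule ex1I)
  define g where "g z = (1/2) * P z + (1/2) * P (- z)" for z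
  define h where "h z = (1/2) * P z + (-1/2) * P (- z)" for z
  have "g \<in> W" "h \<in> W"
    unfolding g_def[abs_def] h_def[abs_def] using assms by blast+
  then show "fst (g, h) \<in> W \<inter> {g. \<forall>z. g (- z) = g z} \<and> snd (g, h) \<in> W \<inter> {h. \<forall>z. h (- z) = - h z}
      \<and> P = (\<lambda>z. fst (g, h) z + snd (g, h) z)"
    by (simp add: g_def h_def field_simps)
  fix gh
  assume "fst gh \<in> W \<inter> {g. \<forall>z. g (- z) = g z} \<and> snd gh \<in> W \<inter> {h. \<forall>z. h (- z) = - h z}
      \<and> P = (\<lambda>z. fst gh z + snd gh z)"
  then have "fst gh z = g z \<and> snd gh z = h z" for z
    by (auto simp: g_def h_def field_simps)
  then show "gh = (g, h)"
    by (simp add: prod_eq_iff fun_eq_iff)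
qed

section \<open>Moebius transformations\<close>

definition aut_factor :: "nat \<Rightarrow> complex \<Rightarrow> complex" where
  "aut_factor k x = (x * cnj x) ^ k"

lemma aut_factor_mult: "aut_factor k (x * y) = aut_factor k x * aut_factor k y"
  by (simp add: aut_factor_def power_mult_distrib mult_ac)

lemma aut_factor_one [simp]: "aut_factor k 1 = 1"
  by (simp add: aut_factor_def)

fun mob_denom :: "mat2 \<Rightarrow> complex \<Rightarrow> complex" where
  "mob_denom (a,b,c,e) z = c * z + e"

fun mob :: "mat2 \<Rightarrow> complex \<Rightarrow> complex" where
  "mob (a,b,c,e) z = (a * z + b) / (c * z + e)"

fun mdet :: "mat2 \<Rightarrow> complex" where
  "mdet (a,b,c,e) = a * e - b * c"

lemma mdet_mmul: "mdet (mmul g h) = mdet g * mdet h"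
  by (cases g; cases h) (simp add: algebra_simps)

lemma mob_denom_mmul:
  assumes "mob_denom h z \<noteq> 0"
  shows "mob_denom g (mob h z) * mob_denom h z = mob_denom (mmul g h) z"
  using assms by (cases g; cases h) (simp add: field_simps)

lemma mob_mmul:
  assumes "mob_denom h z \<noteq> 0"
  shows "mob g (mob h z) = mob (mmul g h) z"
proof -
  obtain a b c e a' b' c' e' where gh: "g = (a,b,c,e)" "h = (a',b',c',e')"
    by (cases g; cases h) auto
  define w where "w = mob h z"
  have num: "(a * w + b) * mob_denom h z = a * (a' * z + b') + b * (c' * z + e')"
    and den: "(c * w + e) * mob_denom h z = c * (a' * z + b') + e * (c' * z + e')"
    using assms by (simp_all add: gh w_def field_simps)
  have "mob g w = ((a * w + b) * mob_denom h z) / ((c * w + e) * mob_denom h z)"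
    using assms by (simp add: gh)
  also have "\<dots> = mob (mmul g h) z"
    unfolding num den by (simp add: gh algebra_simps)
  finally show ?thesis
    by (simp add: w_def)
qed

lemma finite_mob_denom_zeros:
  assumes "mdet g \<noteq> 0"
  shows "finite {z. mob_denom g z = 0}"
proof -
  obtain a b c e where g: "g = (a,b,c,e)"
    by (cases g) auto
  have "{z. mob_denom g z = 0} \<subseteq> {- e / c}"
    using assms by (cases "c = 0") (auto simp: g field_simps eq_neg_iff_add_eq_0 add.commute)
  then show ?thesis
    by (rule finite_subset) simp
qed

section \<open>The slash action on V_{k,k}\<close>

lemma Vkk_pev: "P \<in> Vkk k \<Longrightarrow> P = pev k (coeffs_of k P)"
  unfolding Vkk_def coeffs_of_def by (metis (mono_tags) mem_Collect_eq someI_ex)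

lemma continuous_on_Vkk: "P \<in> Vkk k \<Longrightarrow> continuous_on UNIV P"
  unfolding Vkk_def pev_def by (auto intro!: continuous_intros)

lemma Vkk_zero: "(\<lambda>_. 0) \<in> Vkk k"
  unfolding Vkk_def pev_def by (intro CollectI exI[of _ "\<lambda>_ _. 0"]) simp

lemma Vkk_add:
  assumes "P \<in> Vkk k" "Q \<in> Vkk k"
  shows "(\<lambda>z. P z + Q z) \<in> Vkk k"
proof -
  obtain c d where "P = pev k c" "Q = pev k d"
    using assms by (auto simp: Vkk_def)
  then have "(\<lambda>z. P z + Q z) = pev k (\<lambda>i j. c i j + d i j)"
    by (simp add: fun_eq_iff pev_def sum.distrib distrib_right)
  then show ?thesis
    by (auto simp: Vkk_def)
qed

lemma Vkk_scale:
  assumes "P \<in> Vkk k"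
  shows "(\<lambda>z. r * P z) \<in> Vkk k"
proof -
  obtain c where "P = pev k c"
    using assms by (auto simp: Vkk_def)
  then have "(\<lambda>z. r * P z) = pev k (\<lambda>i j. r * c i j)"
    by (simp add: fun_eq_iff pev_def sum_distrib_left mult.assoc)
  then show ?thesis
    by (auto simp: Vkk_def)
qed

lemma Vkk_sum:
  "finite I \<Longrightarrow> (\<And>i. i \<in> I \<Longrightarrow> F i \<in> Vkk k) \<Longrightarrow> (\<lambda>z. \<Sum>i\<in>I. F i z) \<in> Vkk k"
  by (induction I rule: finite_induct) (simp_all add: Vkk_zero Vkk_add)

lemma poly_eq_sum_atMost:
  fixes p :: "'a::comm_semiring_1 poly"
  assumes "degree p \<le> n"
  shows "poly p x = (\<Sum>i\<le>n. coeff p i * x ^ i)"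
proof -
  have "poly p x = poly (\<Sum>i\<le>n. monom (coeff p i) i) x"
    using poly_as_sum_of_monoms'[OF assms] by simp
  then show ?thesis
    by (simp add: poly_sum poly_monom)
qed

lemma Vkk_poly_mult_cnj_poly:
  assumes "degree p \<le> k" "degree q \<le> k"
  shows "(\<lambda>z. poly p z * cnj (poly q z)) \<in> Vkk k"
proof -
  have "(\<lambda>z. poly p z * cnj (poly q z)) = pev k (\<lambda>i j. coeff p i * cnj (coeff q j))"
    by (simp add: fun_eq_iff pev_def poly_eq_sum_atMost[OF assms(1)] poly_eq_sum_atMost[OF assms(2)]
        sum_product cnj_sum mult_ac)
  then show ?thesis
    by (auto simp: Vkk_def)
qed

lemma slash_in_Vkk: "slash k g P \<in> Vkk k"
proof -
  obtain a b c e where g: "g = (a,b,c,e)"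
    by (cases g) auto
  define A where "A i = [:b, a:] ^ i * [:e, c:] ^ (k - i)" for i
  have deg_linear_power: "degree ([:v, u:] ^ n) \<le> n" for u v :: complex and n
    using degree_pCons_le[of v "[:u:]"] by (intro order_trans[OF degree_power_le]) simp
  have deg: "degree (A i) \<le> k" if "i \<le> k" for i
  proof -
    have "degree (A i) \<le> i + (k - i)"
      unfolding A_def by (rule order_trans[OF degree_mult_le add_mono[OF deg_linear_power deg_linear_power]])
    then show ?thesis
      using that by simp
  qed
  have "slash k g P = (\<lambda>z. \<Sum>i\<le>k. \<Sum>j\<le>k. coeffs_of k P i j * (poly (A i) z * cnj (poly (A j) z)))"
    by (simp add: g A_def fun_eq_iff slash.simps mult.assoc add.commute mult.commute)
  also have "\<dots> \<in> Vkk k"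
    using deg by (intro Vkk_sum Vkk_scale Vkk_poly_mult_cnj_poly) auto
  finally show ?thesis .
qed

lemma continuous_on_slash: "continuous_on UNIV (slash k g P)"
  by (rule continuous_on_Vkk[OF slash_in_Vkk])

lemma slash_eq_aut_factor:
  assumes "P \<in> Vkk k" "mob_denom g z \<noteq> 0"
  shows "slash k g P z = aut_factor k (mob_denom g z) * P (mob g z)"
proof -
  obtain a b c e where g: "g = (a,b,c,e)"
    by (cases g) auto
  define C where "C = coeffs_of k P"
  define x where "x = c * z + e"
  define w where "w = mob g z"
  have "a * z + b = w * x"
    using assms(2) by (simp add: g w_def x_def)
  then have powers: "(a * z + b) ^ i * x ^ (k - i) = x ^ k * w ^ i" if "i \<le> k" for i
    using that by (simp add: power_mult_distrib mult_ac flip: power_add)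
  have "aut_factor k x * P w = (\<Sum>i\<le>k. \<Sum>j\<le>k. C i j * (x ^ k * w ^ i) * cnj (x ^ k * w ^ j))"
    by (subst Vkk_pev[OF assms(1)])
      (simp add: C_def pev_def aut_factor_def sum_distrib_left power_mult_distrib mult_ac)
  also have "\<dots> = slash k g P z"
    unfolding g slash.simps C_def[symmetric] x_def[symmetric]
    by (intro sum.cong refl) (simp add: powers)
  finally show ?thesis
    by (simp add: g x_def w_def)
qed

lemma slash_eqI:
  assumes "P \<in> Vkk k" "mdet g \<noteq> 0" "continuous_on UNIV G"
    and "\<And>z. mob_denom g z \<noteq> 0 \<Longrightarrow> G z = aut_factor k (mob_denom g z) * P (mob g z)"
  shows "slash k g P = G"
  using continuous_on_slash assms(3) finite_mob_denom_zeros[OF assms(2)]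
  by (rule continuous_eq_off_finite) (simp add: assms(4) slash_eq_aut_factor[OF assms(1)])

lemma slash_slash:
  assumes "P \<in> Vkk k" "mdet g \<noteq> 0" "mdet h \<noteq> 0"
  shows "slash k h (slash k g P) = slash k (mmul g h) P"
proof (rule continuous_eq_off_finite[OF continuous_on_slash continuous_on_slash])
  show "finite ({z. mob_denom h z = 0} \<union> {z. mob_denom (mmul g h) z = 0})"
    using assms by (simp add: finite_mob_denom_zeros mdet_mmul)
  fix z
  assume "z \<notin> {z. mob_denom h z = 0} \<union> {z. mob_denom (mmul g h) z = 0}"
  then have hz: "mob_denom h z \<noteq> 0" and ghz: "mob_denom (mmul g h) z \<noteq> 0"
    by auto
  then have gz: "mob_denom g (mob h z) \<noteq> 0"
    by (auto simp flip: mob_denom_mmul[OF hz])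
  have "slash k h (slash k g P) z
      = aut_factor k (mob_denom h z) * (aut_factor k (mob_denom g (mob h z)) * P (mob g (mob h z)))"
    by (simp add: slash_eq_aut_factor[OF slash_in_Vkk hz] slash_eq_aut_factor[OF assms(1) gz])
  also have "\<dots> = slash k (mmul g h) P z"
    by (simp add: slash_eq_aut_factor[OF assms(1) ghz] mob_mmul[OF hz] mult_ac
        flip: mob_denom_mmul[OF hz] aut_factor_mult)
  finally show "slash k h (slash k g P) z = slash k (mmul g h) P z" .
qed

lemma slash_lincomb:
  assumes "P \<in> Vkk k" "Q \<in> Vkk k" "mdet g \<noteq> 0"
  shows "slash k g (\<lambda>z. r * P z + s * Q z) = (\<lambda>z. r * slash k g P z + s * slash k g Q z)"
  using assms
  by (intro slash_eqI Vkk_add Vkk_scale continuous_intros continuous_on_slash)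
    (simp_all add: slash_eq_aut_factor algebra_simps)

lemma slash_mId: "P \<in> Vkk k \<Longrightarrow> slash k mId P = P"
  by (rule slash_eqI) (simp_all add: mId_def continuous_on_Vkk)

lemma slash_meps: "P \<in> Vkk k \<Longrightarrow> slash k meps P = (\<lambda>z. P (- z))"
  by (rule slash_eqI)
    (simp_all add: meps_def continuous_on_compose2[OF continuous_on_Vkk] continuous_intros)

section \<open>The action of the group ring\<close>

definition gr_lmul :: "mat2 \<Rightarrow> (complex \<times> mat2) list \<Rightarrow> (complex \<times> mat2) list" where
  "gr_lmul g X = map (\<lambda>(n, h). (n, mmul g h)) X"

definition gr_rmul :: "(complex \<times> mat2) list \<Rightarrow> mat2 \<Rightarrow> (complex \<times> mat2) list" where
  "gr_rmul X g = map (\<lambda>(n, h). (n, mmul h g)) X"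

lemma slashX_Nil: "slashX k [] P = (\<lambda>_. 0)"
  by (simp add: slashX_def)

lemma slashX_Cons: "slashX k ((n, h) # X) P = (\<lambda>z. n * slash k h P z + slashX k X P z)"
  by (simp add: slashX_def)

lemma slashX_in_Vkk: "slashX k X P \<in> Vkk k"
proof (induction X)
  case Nil
  then show ?case
    by (simp add: slashX_Nil Vkk_zero)
next
  case (Cons p X)
  obtain n h where p: "p = (n, h)"
    by (rule prod.exhaust)
  show ?case
    unfolding p slashX_Cons by (rule Vkk_add[OF Vkk_scale[OF slash_in_Vkk] Cons.IH])
qed

lemma slashX_mset_eq:
  assumes "mset X = mset Y"
  shows "slashX k X P = slashX k Y P"
proof
  fix z
  have "mset (map (\<lambda>(n, g). n * slash k g P z) X) = mset (map (\<lambda>(n, g). n * slash k g P z) Y)"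
    using assms by simp
  then show "slashX k X P z = slashX k Y P z"
    unfolding slashX_def by (simp only: flip: sum_mset_sum_list)
qed

lemma slashX_lincomb:
  assumes "P \<in> Vkk k" "Q \<in> Vkk k" "\<forall>h \<in> snd ` set X. mdet h \<noteq> 0"
  shows "slashX k X (\<lambda>z. r * P z + s * Q z) = (\<lambda>z. r * slashX k X P z + s * slashX k X Q z)"
  using assms(3)
proof (induction X)
  case Nil
  then show ?case
    by (simp add: slashX_Nil)
next
  case (Cons p X)
  obtain n h where p: "p = (n, h)"
    by (rule prod.exhaust)
  have "mdet h \<noteq> 0"
    using Cons.prems by (simp add: p)
  then show ?case
    using Cons by (simp add: p slashX_Cons slash_lincomb[OF assms(1,2)] algebra_simps)
qed

lemma slashX_slash:
  assumes "P \<in> Vkk k" "mdet g \<noteq> 0" "\<forall>h \<in> snd ` set X. mdet h \<noteq> 0"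
  shows "slashX k X (slash k g P) = slashX k (gr_lmul g X) P"
  using assms(3)
proof (induction X)
  case Nil
  then show ?case
    by (simp add: gr_lmul_def slashX_Nil)
next
  case (Cons p X)
  obtain n h where p: "p = (n, h)"
    by (rule prod.exhaust)
  have "mdet h \<noteq> 0"
    using Cons.prems by (simp add: p)
  then show ?case
    using Cons by (simp add: p gr_lmul_def slashX_Cons slash_slash assms(1,2))
qed

lemma slashX_gr_rmul:
  assumes "P \<in> Vkk k" "mdet g \<noteq> 0" "\<forall>h \<in> snd ` set X. mdet h \<noteq> 0" "mob_denom g z \<noteq> 0"
  shows "slashX k (gr_rmul X g) P z = aut_factor k (mob_denom g z) * slashX k X P (mob g z)"
  using assms(3)
proof (induction X)
  case Nil
  then show ?case
    by (simp add: gr_rmul_def slashX_Nil)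
next
  case (Cons p X)
  obtain n h where p: "p = (n, h)"
    by (rule prod.exhaust)
  have "mdet h \<noteq> 0"
    using Cons.prems by (simp add: p)
  then have "slash k (mmul h g) P z = aut_factor k (mob_denom g z) * slash k h P (mob g z)"
    using assms by (simp flip: slash_slash add: slash_eq_aut_factor[OF slash_in_Vkk])
  then show ?case
    using Cons by (simp add: p gr_rmul_def slashX_Cons algebra_simps)
qed

lemma kerX_gr_rmul:
  assumes "P \<in> kerX k X" "mdet g \<noteq> 0" "\<forall>h \<in> snd ` set X. mdet h \<noteq> 0"
  shows "P \<in> kerX k (gr_rmul X g)"
proof -
  have P: "P \<in> Vkk k" and X: "slashX k X P = (\<lambda>_. 0)"
    using assms(1) by (simp_all add: kerX_def)
  have "slashX k (gr_rmul X g) P = (\<lambda>_. 0)"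
    using continuous_on_Vkk[OF slashX_in_Vkk] continuous_on_const finite_mob_denom_zeros[OF assms(2)]
  proof (rule continuous_eq_off_finite)
    fix z
    assume "z \<notin> {z. mob_denom g z = 0}"
    then show "slashX k (gr_rmul X g) P z = 0"
      using slashX_gr_rmul[OF P assms(2,3)] X by simp
  qed
  with P show ?thesis
    by (simp add: kerX_def)
qed

lemma slashX_scale:
  assumes "P \<in> Vkk k" "\<forall>h \<in> snd ` set X. mdet h \<noteq> 0"
  shows "slashX k X (\<lambda>z. c * P z) = (\<lambda>z. c * slashX k X P z)"
  using slashX_lincomb[OF assms(1) assms(1) assms(2), of c 0] by simp

lemma kerX_lincomb:
  assumes "P \<in> kerX k X" "Q \<in> kerX k X" "\<forall>h \<in> snd ` set X. mdet h \<noteq> 0"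
  shows "(\<lambda>z. r * P z + s * Q z) \<in> kerX k X"
  using assms by (simp add: kerX_def slashX_lincomb Vkk_add Vkk_scale)

lemma slash_in_kerX:
  assumes "P \<in> kerX k X" "slash k h P = (\<lambda>z. c * P z)"
    and "mdet g \<noteq> 0" "mdet h \<noteq> 0" "mdet B \<noteq> 0" "\<forall>h' \<in> snd ` set X. mdet h' \<noteq> 0"
    and "mset (gr_lmul g X) = mset (gr_rmul (gr_lmul h X) B)"
  shows "slash k g P \<in> kerX k X"
proof -
  have P: "P \<in> Vkk k" and X: "slashX k X P = (\<lambda>_. 0)"
    using assms(1) by (simp_all add: kerX_def)
  have hX: "\<forall>h' \<in> snd ` set (gr_lmul h X). mdet h' \<noteq> 0"
    using assms(4,6) by (auto simp: gr_lmul_def mdet_mmul)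
  have "slashX k (gr_lmul h X) P = slashX k X (\<lambda>z. c * P z)"
    using slashX_slash[OF P assms(4,6)] assms(2) by simp
  also have "\<dots> = (\<lambda>_. 0)"
    using slashX_scale[OF P assms(6)] X by simp
  finally have "P \<in> kerX k (gr_lmul h X)"
    using P by (simp add: kerX_def)
  then have "P \<in> kerX k (gr_rmul (gr_lmul h X) B)"
    using kerX_gr_rmul[OF _ assms(5) hX] by blast
  then have "slashX k X (slash k g P) = (\<lambda>_. 0)"
    using slashX_slash[OF P assms(3,6)] slashX_mset_eq[OF assms(7)] by (simp add: kerX_def)
  then show ?thesis
    by (simp add: kerX_def slash_in_Vkk)
qed

section \<open>Conjugation by eps\<close>

abbreviation X_S :: "(complex \<times> mat2) list" where
  "X_S \<equiv> [(1, mId), (1, mS)]"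

abbreviation X_U :: "(complex \<times> mat2) list" where
  "X_U \<equiv> [(1, mId), (1, mU), (1, mmul mU mU)]"

abbreviation X_T :: "(complex \<times> mat2) list" where
  "X_T \<equiv> [(1, mId), (1, mmul mS mTw), (1, mmul mTw mS), (1, mmul (mmul (mmul (minv mTw) mS) mTw) mS)]"

lemma omega_sq: "omega * omega = -2"
proof -
  have "omega * omega = (\<i> * \<i>) * complex_of_real (sqrt 2 * sqrt 2)"
    unfolding omega_def of_real_mult by (simp only: mult_ac)
  then show ?thesis
    by simp
qed

lemma kerX_S_slash_mS:
  assumes "P \<in> kerX k X_S"
  shows "slash k mS P = (\<lambda>z. - P z)"
  using assms by (simp add: kerX_def slashX_Cons slashX_Nil slash_mId fun_eq_iff add_eq_0_iff)

lemma slash_meps_in_kerX_S: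
  assumes "P \<in> kerX k X_S"
  shows "slash k meps P \<in> kerX k X_S"
  using kerX_S_slash_mS[OF assms]
  by (intro slash_in_kerX[OF assms, where h = mS and c = "-1" and B = "(1,0,0,-1)"])
    (simp_all add: mS_def mId_def meps_def gr_lmul_def gr_rmul_def add_mset_commute)

lemma slash_meps_in_kerX_U:
  assumes "P \<in> kerX k X_S" "P \<in> kerX k X_U"
  shows "slash k meps P \<in> kerX k X_U"
  using kerX_S_slash_mS[OF assms(1)]
  by (intro slash_in_kerX[OF assms(2), where h = mS and c = "-1" and B = "(1,-1,0,-1)"])
    (simp_all add: mU_def mT_def mS_def mId_def meps_def gr_lmul_def gr_rmul_def add_mset_commute)

lemma slash_meps_in_kerX_T:
  assumes "P \<in> kerX k X_S" "P \<in> kerX k X_T"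
  shows "slash k meps P \<in> kerX k X_T"
  using kerX_S_slash_mS[OF assms(1)]
  by (intro slash_in_kerX[OF assms(2), where h = mS and c = "-1" and B = "(1,omega,0,-1)"])
    (simp_all add: mS_def mTw_def mId_def meps_def gr_lmul_def gr_rmul_def add_mset_commute omega_sq)

lemma Wkk_Vkk: "P \<in> Wkk k \<Longrightarrow> P \<in> Vkk k"
  by (simp add: Wkk_def kerX_def)

lemma slash_meps_in_Wkk: "P \<in> Wkk k \<Longrightarrow> slash k meps P \<in> Wkk k"
  unfolding Wkk_def using slash_meps_in_kerX_S slash_meps_in_kerX_U slash_meps_in_kerX_T by blast

lemma Wkk_reflect:
  assumes "P \<in> Wkk k"
  shows "(\<lambda>z. P (- z)) \<in> Wkk k"
  using slash_meps_in_Wkk[OF assms] by (simp add: slash_meps[OF Wkk_Vkk[OF assms]])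

lemma Wkk_lincomb:
  assumes "P \<in> Wkk k" "Q \<in> Wkk k"
  shows "(\<lambda>z. r * P z + s * Q z) \<in> Wkk k"
proof -
  have "\<forall>h \<in> snd ` set X_S. mdet h \<noteq> 0"
    and "\<forall>h \<in> snd ` set X_U. mdet h \<noteq> 0"
    and "\<forall>h \<in> snd ` set X_T. mdet h \<noteq> 0"
    by (simp_all add: mId_def mS_def mU_def mT_def mTw_def omega_sq)
  then show ?thesis
    using assms unfolding Wkk_def by (blast intro: kerX_lincomb)
qed

theorem proposition5p10:
  fixes k :: nat
  assumes "odd k" and "k \<ge> 1"
  shows "slash k meps ` Wkk k = Wkk k
    \<and> (\<forall>P \<in> Wkk k. \<exists>!gh. fst gh \<in> Wkk_sign k 1 \<and> snd gh \<in> Wkk_sign k (-1)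
                       \<and> P = (\<lambda>z. fst gh z + snd gh z))"
proof (intro conjI ballI)
  show "slash k meps ` Wkk k = Wkk k"
  proof
    show "slash k meps ` Wkk k \<subseteq> Wkk k"
      using slash_meps_in_Wkk by blast
    show "Wkk k \<subseteq> slash k meps ` Wkk k"
    proof
      fix P
      assume "P \<in> Wkk k"
      then have reflected: "(\<lambda>z. P (- z)) \<in> Wkk k"
        by (rule Wkk_reflect)
      then have "P = slash k meps (\<lambda>z. P (- z))"
        using slash_meps[OF Wkk_Vkk[OF reflected]] by simp
      with reflected show "P \<in> slash k meps ` Wkk k"
        by blast
    qed
  qed
next
  fix P
  assume "P \<in> Wkk k"
  have sign_plus: "Wkk_sign k 1 = Wkk k \<inter> {g. \<forall>z. g (- z) = g z}"
    and sign_minus: "Wkk_sign k (-1) = Wkk k \<inter> {h. \<forall>z. h (- z) = - h z}"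
    by (auto simp: Wkk_sign_def Wkk_Vkk)
  show "\<exists>!gh. fst gh \<in> Wkk_sign k 1 \<and> snd gh \<in> Wkk_sign k (-1) \<and> P = (\<lambda>z. fst gh z + snd gh z)"
    unfolding sign_plus sign_minus using Wkk_lincomb Wkk_reflect \<open>P \<in> Wkk k\<close> by (rule even_odd_decomposition)
qed

end
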